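(* Let $K$ be a nilpotent group of class $3$, let $x,y\in K$, and let $\alpha>1$ be an integer such that the elements $x^{2^{\alpha}}$, $[x,y]^{2^{\alpha-1}}$ and $x^{2^{\alpha-1}}[x,y]^{-2^{\alpha-2}}$ all centralize $\langle x,y\rangle$. Then $y^{2^{\alpha-1}}$ commutes with $x$.
   Context: Commutators are $[x,y]=x^{-1}y^{-1}xy$, left-normed: $[x,y,z]=[[x,y],z]$. *)

theory Defs
  imports "HOL-Algebra.Algebra"
begin

definition commutator :: "('a, 'b) monoid_scheme \<Rightarrow> 'a \<Rightarrow> 'a \<Rightarrow> 'a" where
  "commutator G x y = inv\<^bsub>G\<^esub> x \<otimes>\<^bsub>G\<^esub> inv\<^bsub>G\<^esub> y \<otimes>\<^bsub>G\<^esub> x \<otimes>\<^bsub>G\<^esub> y"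

text \<open>Lower central series: gamma_1 = G, gamma_(i+1) = [gamma_i, G].
  Here lower_central G 0 = gamma_1.\<close>
fun lower_central :: "('a, 'b) monoid_scheme \<Rightarrow> nat \<Rightarrow> 'a set" where
  "lower_central G 0 = carrier G"
| "lower_central G (Suc n) =
     generate G {commutator G a b | a b. a \<in> lower_central G n \<and> b \<in> carrier G}"

text \<open>G is nilpotent of class exactly c: gamma_(c+1) = 1 and gamma_c \<noteq> 1.\<close>
definition nilpotent_of_class :: "('a, 'b) monoid_scheme \<Rightarrow> nat \<Rightarrow> bool" where
  "nilpotent_of_class G c \<longleftrightarrow>
     group G \<and> lower_central G c = {\<one>\<^bsub>G\<^esub>} \<and>
     (c = 0 \<or> lower_central G (c - 1) \<noteq> {\<one>\<^bsub>G\<^esub>})"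

definition centralizes :: "('a, 'b) monoid_scheme \<Rightarrow> 'a \<Rightarrow> 'a set \<Rightarrow> bool" where
  "centralizes G g H \<longleftrightarrow> (\<forall>h\<in>H. g \<otimes>\<^bsub>G\<^esub> h = h \<otimes>\<^bsub>G\<^esub> g)"

end

theory Submission
  imports Defs
begin

(*
  Write c = [x,y], d = [c,x] and e = [c,y]. In class 3 both d and e are central, so the
  relations x y = y x c, c x = x c d, c y = y c e yield the Hall-type expansions
    x^k y = y x^k c^k d^(k choose 2)   and   x y^k = y^k x c^k e^(k choose 2).
  Let n = 2^(alpha-1) = 2m. Since c^n commutes with y, e^n = 1. Writing x^n = P c^m with
  P = x^n c^-m centralizing <x,y>, c^m commutes with x, so d^m = 1; comparing the two
  resulting expressions for x^n y gives c^n = e^m. Hence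
  [x, y^n] = c^n e^(n choose 2) = e^(m + m(n-1)) = (e^n)^m = 1.
*)

lemma Suc_choose_two: "Suc k choose 2 = k + (k choose 2)"
  by (simp add: numeral_2_eq_2)

lemma double_choose_two: "2 * m choose 2 = m * (2 * m - 1)"
  by (simp add: choose_two mult.assoc)

context group
begin

lemma commutator_closed [simp]:
  "a \<in> carrier G \<Longrightarrow> b \<in> carrier G \<Longrightarrow> commutator G a b \<in> carrier G"
  by (simp add: commutator_def)

lemma swap_commutator:
  assumes "a \<in> carrier G" "b \<in> carrier G"
  shows "a \<otimes> b = b \<otimes> a \<otimes> commutator G a b"
proof -
  have cancel: "\<And>u w. u \<in> carrier G \<Longrightarrow> w \<in> carrier G \<Longrightarrow> u \<otimes> (inv u \<otimes> w) = w"
    by (simp add: m_assoc[symmetric])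
  show ?thesis
    using assms by (simp add: commutator_def m_assoc cancel)
qed

lemma lower_central_subset_carrier: "lower_central G n \<subseteq> carrier G"
proof (induction n)
  case (Suc n)
  then show ?case
    by (auto intro!: generate_incl)
qed simp

lemma commutator_in_lower_central:
  "a \<in> lower_central G n \<Longrightarrow> b \<in> carrier G \<Longrightarrow> commutator G a b \<in> lower_central G (Suc n)"
  by (auto intro: generate.incl)

lemma centralizes_of_lower_central:
  assumes trivial: "lower_central G (Suc n) = {\<one>}" and a: "a \<in> lower_central G n"
  shows "centralizes G a (carrier G)"
  unfolding centralizes_def
proof
  fix g assume g: "g \<in> carrier G"
  have a_carrier: "a \<in> carrier G"
    using a lower_central_subset_carrier by blast
  have "commutator G a g = \<one>"
    using commutator_in_lower_central[OF a g] trivial by blast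
  then show "a \<otimes> g = g \<otimes> a"
    using swap_commutator[OF a_carrier g] a_carrier g by simp
qed

lemma central_nat_pow_commute:
  assumes "centralizes G z (carrier G)" "z \<in> carrier G" "g \<in> carrier G"
  shows "z [^] (k::nat) \<otimes> g = g \<otimes> z [^] k"
  using assms group_commutes_pow unfolding centralizes_def by blast

lemma swap_nat_pow_left:
  assumes a: "a \<in> carrier G" and b: "b \<in> carrier G" and z: "z \<in> carrier G"
    and swap: "a \<otimes> b = b \<otimes> a \<otimes> z" and central: "centralizes G z (carrier G)"
  shows "a [^] (k::nat) \<otimes> b = b \<otimes> a [^] k \<otimes> z [^] k"
proof (induction k)
  case (Suc k)
  have "a [^] Suc k \<otimes> b = (a [^] k \<otimes> b) \<otimes> a \<otimes> z"
    using a b z swap by (simp add: m_assoc)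
  also have "\<dots> = b \<otimes> a [^] k \<otimes> (z [^] k \<otimes> a) \<otimes> z"
    using Suc a b z by (simp add: m_assoc)
  also have "\<dots> = b \<otimes> a [^] Suc k \<otimes> z [^] Suc k"
    using central_nat_pow_commute[OF central z a] a b z by (simp add: m_assoc)
  finally show ?case .
qed (use b in simp)

lemma swap_nat_pow_right:
  assumes a: "a \<in> carrier G" and b: "b \<in> carrier G" and z: "z \<in> carrier G"
    and swap: "a \<otimes> b = b \<otimes> a \<otimes> z" and central: "centralizes G z (carrier G)"
  shows "a \<otimes> b [^] (k::nat) = b [^] k \<otimes> a \<otimes> z [^] k"
proof (induction k)
  case (Suc k)
  have "a \<otimes> b [^] Suc k = b [^] k \<otimes> a \<otimes> (z [^] k \<otimes> b)"
    using Suc a b z by (simp add: m_assoc[symmetric])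
  also have "\<dots> = b [^] k \<otimes> (a \<otimes> b) \<otimes> z [^] k"
    using central_nat_pow_commute[OF central z b] a b z by (simp add: m_assoc)
  also have "\<dots> = b [^] Suc k \<otimes> a \<otimes> (z \<otimes> z [^] k)"
    using swap a b z by (simp add: m_assoc)
  also have "\<dots> = b [^] Suc k \<otimes> a \<otimes> z [^] Suc k"
    using z by (simp add: nat_pow_Suc2[symmetric])
  finally show ?case .
qed (use a in simp)

lemma swap_nat_pow_right_class3:
  assumes a: "a \<in> carrier G" and b: "b \<in> carrier G" and z: "z \<in> carrier G" and w: "w \<in> carrier G"
    and swap: "a \<otimes> b = b \<otimes> a \<otimes> z" and swap': "z \<otimes> b = b \<otimes> z \<otimes> w"
    and central: "centralizes G w (carrier G)"
  shows "a \<otimes> b [^] (k::nat) = b [^] k \<otimes> a \<otimes> z [^] k \<otimes> w [^] (k choose 2)"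
proof (induction k)
  case (Suc k)
  have "a \<otimes> b [^] Suc k = b [^] k \<otimes> a \<otimes> z [^] k \<otimes> (w [^] (k choose 2) \<otimes> b)"
    using Suc a b z w by (simp add: m_assoc[symmetric])
  also have "\<dots> = b [^] k \<otimes> a \<otimes> (z [^] k \<otimes> b) \<otimes> w [^] (k choose 2)"
    using central_nat_pow_commute[OF central w b] a b z w by (simp add: m_assoc)
  also have "\<dots> = b [^] k \<otimes> (a \<otimes> b) \<otimes> z [^] k \<otimes> w [^] k \<otimes> w [^] (k choose 2)"
    using swap_nat_pow_left[OF z b w swap' central] a b z w by (simp add: m_assoc)
  also have "\<dots> = b [^] Suc k \<otimes> a \<otimes> (z \<otimes> z [^] k) \<otimes> (w [^] k \<otimes> w [^] (k choose 2))"
    using swap a b z w by (simp add: m_assoc)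
  also have "\<dots> = b [^] Suc k \<otimes> a \<otimes> z [^] Suc k \<otimes> w [^] (Suc k choose 2)"
    using z w by (simp add: nat_pow_Suc2[symmetric] nat_pow_mult Suc_choose_two)
  finally show ?case .
qed (use a in \<open>simp add: numeral_2_eq_2\<close>)

lemma swap_nat_pow_left_class3:
  assumes a: "a \<in> carrier G" and b: "b \<in> carrier G" and z: "z \<in> carrier G" and w: "w \<in> carrier G"
    and swap: "a \<otimes> b = b \<otimes> a \<otimes> z" and swap': "z \<otimes> a = a \<otimes> z \<otimes> w"
    and central: "centralizes G w (carrier G)"
  shows "a [^] (k::nat) \<otimes> b = b \<otimes> a [^] k \<otimes> z [^] k \<otimes> w [^] (k choose 2)"
proof (induction k)
  case (Suc k)
  have "a [^] Suc k \<otimes> b = a \<otimes> (a [^] k \<otimes> b)"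
    using a b by (subst nat_pow_Suc2) (simp_all add: m_assoc)
  also have "\<dots> = (a \<otimes> b) \<otimes> a [^] k \<otimes> z [^] k \<otimes> w [^] (k choose 2)"
    using Suc a b z w by (simp add: m_assoc)
  also have "\<dots> = b \<otimes> a \<otimes> (z \<otimes> a [^] k) \<otimes> z [^] k \<otimes> w [^] (k choose 2)"
    using swap a b z w by (simp add: m_assoc)
  also have "\<dots> = b \<otimes> (a \<otimes> a [^] k) \<otimes> z \<otimes> (w [^] k \<otimes> z [^] k) \<otimes> w [^] (k choose 2)"
    using swap_nat_pow_right[OF z a w swap' central] a b z w by (simp add: m_assoc)
  also have "\<dots> = b \<otimes> (a \<otimes> a [^] k) \<otimes> (z \<otimes> z [^] k) \<otimes> (w [^] k \<otimes> w [^] (k choose 2))"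
    using central_nat_pow_commute[OF central w, of "z [^] k"] a b z w by (simp add: m_assoc)
  also have "\<dots> = b \<otimes> a [^] Suc k \<otimes> z [^] Suc k \<otimes> w [^] (Suc k choose 2)"
    using a z w by (simp add: nat_pow_Suc2[symmetric] nat_pow_mult Suc_choose_two)
  finally show ?case .
qed (use b in \<open>simp add: numeral_2_eq_2\<close>)

lemma nat_pow_commute_iff:
  assumes a: "a \<in> carrier G" and b: "b \<in> carrier G" and z: "z \<in> carrier G"
    and swap: "a \<otimes> b = b \<otimes> a \<otimes> z" and central: "centralizes G z (carrier G)"
  shows "a [^] (k::nat) \<otimes> b = b \<otimes> a [^] k \<longleftrightarrow> z [^] k = \<one>"
  using swap_nat_pow_left[OF assms] a b z by simp

lemma double_pow_commute_class3:
  fixes m :: nat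
  assumes x: "x \<in> carrier G" and y: "y \<in> carrier G"
    and c: "c \<in> carrier G" and d: "d \<in> carrier G" and e: "e \<in> carrier G"
    and xy: "x \<otimes> y = y \<otimes> x \<otimes> c" and cx: "c \<otimes> x = x \<otimes> c \<otimes> d" and cy: "c \<otimes> y = y \<otimes> c \<otimes> e"
    and d_central: "centralizes G d (carrier G)" and e_central: "centralizes G e (carrier G)"
    and c_pow_y: "c [^] (2 * m) \<otimes> y = y \<otimes> c [^] (2 * m)"
    and P_x: "(x [^] (2 * m) \<otimes> inv (c [^] m)) \<otimes> x = x \<otimes> (x [^] (2 * m) \<otimes> inv (c [^] m))"
    and P_y: "(x [^] (2 * m) \<otimes> inv (c [^] m)) \<otimes> y = y \<otimes> (x [^] (2 * m) \<otimes> inv (c [^] m))"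
  shows "y [^] (2 * m) \<otimes> x = x \<otimes> y [^] (2 * m)"
proof -
  define P where "P = x [^] (2 * m) \<otimes> inv (c [^] m)"
  have P: "P \<in> carrier G" and x_pow: "x [^] (2 * m) = P \<otimes> c [^] m"
    unfolding P_def using x c by (simp_all add: m_assoc)
  have e_pow: "e [^] (2 * m) = \<one>"
    using c_pow_y nat_pow_commute_iff[OF c y e cy e_central] by simp
  have "P \<otimes> (c [^] m \<otimes> x) = x [^] (2 * m) \<otimes> x"
    using x_pow P x c by (simp add: m_assoc)
  also have "\<dots> = (x \<otimes> P) \<otimes> c [^] m"
    using nat_pow_comm[OF x, of "2 * m" 1] x_pow P x c by (simp add: m_assoc)
  also have "\<dots> = P \<otimes> (x \<otimes> c [^] m)"
    using P x c by (simp add: P_x[folded P_def, symmetric] m_assoc)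
  finally have d_pow: "d [^] m = \<one>"
    using nat_pow_commute_iff[OF c x d cx d_central] P x c by simp
  have "x [^] (2 * m) \<otimes> y = P \<otimes> (c [^] m \<otimes> y)"
    using x_pow P y c by (simp add: m_assoc)
  also have "\<dots> = (P \<otimes> y) \<otimes> c [^] m \<otimes> e [^] m"
    using swap_nat_pow_left[OF c y e cy e_central, of m] P y c e by (simp add: m_assoc)
  also have "\<dots> = y \<otimes> x [^] (2 * m) \<otimes> e [^] m"
    using x_pow P y c e by (simp add: P_y[folded P_def] m_assoc)
  moreover have "x [^] (2 * m) \<otimes> y = y \<otimes> x [^] (2 * m) \<otimes> c [^] (2 * m)"
  proof -
    have "d [^] (2 * m choose 2) = (d [^] m) [^] (2 * m - 1)"
      using d by (simp add: double_choose_two nat_pow_pow)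
    then show ?thesis
      using swap_nat_pow_left_class3[OF x y c d xy cx d_central, of "2 * m"] d_pow x y c by simp
  qed
  ultimately have c_pow: "c [^] (2 * m) = e [^] m"
    using x y c e by (simp add: m_assoc)
  have "m + m * (2 * m - 1) = 2 * m * m"
    by (cases m) simp_all
  then have "c [^] (2 * m) \<otimes> e [^] (2 * m choose 2) = (e [^] (2 * m)) [^] m"
    using e by (simp add: c_pow double_choose_two nat_pow_mult nat_pow_pow)
  then show ?thesis
    using swap_nat_pow_right_class3[OF x y c e xy cy e_central, of "2 * m"] e_pow x y c e
    by (simp add: m_assoc)
qed

end

theorem lemma6p1:
  fixes K (structure) and x y :: 'a and \<alpha> :: nat
  assumes "nilpotent_of_class K 3"
    and "x \<in> carrier K" and "y \<in> carrier K"
    and "\<alpha> > 1"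
    and "centralizes K (x [^] ((2::nat) ^ \<alpha>)) (generate K {x, y})"
    and "centralizes K (commutator K x y [^] ((2::nat) ^ (\<alpha> - 1))) (generate K {x, y})"
    and "centralizes K (x [^] ((2::nat) ^ (\<alpha> - 1)) \<otimes> inv (commutator K x y [^] ((2::nat) ^ (\<alpha> - 2))))
           (generate K {x, y})"
  shows "y [^] ((2::nat) ^ (\<alpha> - 1)) \<otimes> x = x \<otimes> y [^] ((2::nat) ^ (\<alpha> - 1))"
proof -
  interpret group K
    using assms(1) by (simp add: nilpotent_of_class_def)
  have class3: "lower_central K (Suc (Suc (Suc 0))) = {\<one>}"
    using assms(1) unfolding nilpotent_of_class_def numeral_3_eq_3 by blast
  note x = assms(2) and y = assms(3)
  define c where "c = commutator K x y"
  have "c \<in> lower_central K (Suc 0)"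
    unfolding c_def using commutator_in_lower_central[of x 0 y] x y by simp
  then have central: "centralizes K (commutator K c g) (carrier K)" if "g \<in> carrier K" for g
    using centralizes_of_lower_central[OF class3] commutator_in_lower_central that by blast
  define m where "m = (2::nat) ^ (\<alpha> - 2)"
  have two_pow: "(2::nat) ^ (\<alpha> - 1) = 2 * m"
    using assms(4) by (simp add: m_def power_Suc[symmetric] Suc_diff_Suc numeral_2_eq_2)
  have c: "c \<in> carrier K"
    unfolding c_def using x y by simp
  have "x \<in> generate K {x, y}" "y \<in> generate K {x, y}"
    by (auto intro: generate.incl)
  then have c_pow_y: "c [^] (2 * m) \<otimes> y = y \<otimes> c [^] (2 * m)"
    and P_x: "(x [^] (2 * m) \<otimes> inv (c [^] m)) \<otimes> x = x \<otimes> (x [^] (2 * m) \<otimes> inv (c [^] m))"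
    and P_y: "(x [^] (2 * m) \<otimes> inv (c [^] m)) \<otimes> y = y \<otimes> (x [^] (2 * m) \<otimes> inv (c [^] m))"
    using assms(6,7) unfolding centralizes_def two_pow m_def[symmetric] c_def by blast+
  show ?thesis
    unfolding two_pow
    by (rule double_pow_commute_class3[OF x y c commutator_closed[OF c x] commutator_closed[OF c y]
          swap_commutator[OF x y, folded c_def] swap_commutator[OF c x] swap_commutator[OF c y]
          central[OF x] central[OF y] c_pow_y P_x P_y])
qed

end
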